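(* Let $K$ be a valued field, $d\ge 1$ and $S\subseteq K^d$ convex. (1) If $0\in S$ and $S=\operatorname{conv}(Y)$ for some finite $Y$, then $S$ is generated as an $\mathcal{O}_K$-module by a finite $K$-linearly independent set of vectors. (2) If $L$ is a valued field extension of $K$ (i.e. $K\subseteq L$ and $\nu_L$ restricted to $K$ equals $\nu_K$), then $\operatorname{conv}_{L^d}(S)\cap K^d=S$, where $\operatorname{conv}_{L^d}(S)$ denotes the convex hull of $S$ computed in $L^d$ with respect to $\mathcal{O}_L$.
   Context: For a valued field $F$ with valuation $\nu_F$, $\mathcal{O}_F=\{x\in F:\nu_F(x)\ge0\}$. A set $X\subseteq F^d$ is convex (over $F$) if it is closed under combinations $\sum_{i=1}^n\alpha_ix_i$ with $x_i\in X$, $\alpha_i\in\mathcal{O}_F$, $\sum\alpha_i=1$; $\operatorname{conv}$ denotes the smallest convex superset, i.e. the set of all such combinations. *)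

theory Defs
  imports "HOL-Analysis.Analysis"
begin

text \<open>Valuations: \<nu> : F \<rightarrow> \<Gamma> \<union> {\<infinity>}, with \<Gamma> an ordered abelian group;
  the value \<infinity> is represented by None.\<close>

definition vge :: "'g::linordered_ab_group_add option \<Rightarrow> 'g option \<Rightarrow> bool" where
  "vge a b \<longleftrightarrow> a = None \<or> (b \<noteq> None \<and> the b \<le> the a)"

definition valuation :: "('a::field \<Rightarrow> 'g::linordered_ab_group_add option) \<Rightarrow> bool" where
  "valuation v \<longleftrightarrow>
     (\<forall>x. v x = None \<longleftrightarrow> x = 0) \<and>
     (\<forall>x y. x \<noteq> 0 \<longrightarrow> y \<noteq> 0 \<longrightarrow> v (x * y) = Some (the (v x) + the (v y))) \<and>
     (\<forall>x y. vge (v (x + y)) (v x) \<or> vge (v (x + y)) (v y))"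

definition vring :: "('a::field \<Rightarrow> 'g::linordered_ab_group_add option) \<Rightarrow> 'a set" where
  "vring v = {x. vge (v x) (Some 0)}"

definition vconv :: "('a::field \<Rightarrow> 'g::linordered_ab_group_add option) \<Rightarrow> ('a^'n) set \<Rightarrow> ('a^'n) set" where
  "vconv v X = {y. \<exists>(m::nat) (x::nat \<Rightarrow> 'a^'n) (\<alpha>::nat \<Rightarrow> 'a).
      (\<forall>i<m. x i \<in> X \<and> \<alpha> i \<in> vring v) \<and> (\<Sum>i<m. \<alpha> i) = 1 \<and> y = (\<Sum>i<m. \<alpha> i *s x i)}"

definition vconvex :: "('a::field \<Rightarrow> 'g::linordered_ab_group_add option) \<Rightarrow> ('a^'n) set \<Rightarrow> bool" where
  "vconvex v X \<longleftrightarrow> (\<forall>y \<in> vconv v X. y \<in> X)"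

definition vring_span :: "('a::field \<Rightarrow> 'g::linordered_ab_group_add option) \<Rightarrow> ('a^'n) set \<Rightarrow> ('a^'n) set" where
  "vring_span v B = {y. \<exists>c. (\<forall>b\<in>B. c b \<in> vring v) \<and> y = (\<Sum>b\<in>B. c b *s b)}"

definition vmap :: "('a \<Rightarrow> 'b) \<Rightarrow> 'a^'n \<Rightarrow> 'b^'n" where
  "vmap f x = (\<chi> i. f (x $ i))"

end

theory Submission
  imports Defs
begin

text \<open>
  The common tool is elimination: if \<open>\<Sum>i. \<gamma>\<^sub>i w\<^sub>i = 0\<close> is a nontrivial linear relation and
  \<open>\<nu>(\<gamma>\<^sub>j)\<close> is minimal, then every \<open>\<O>\<close>-combination of the \<open>w\<^sub>i\<close> is an \<open>\<O>\<close>-combination of the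
  \<open>w\<^sub>i\<close> with \<open>i \<noteq> j\<close>: subtract \<open>c\<^sub>j / \<gamma>\<^sub>j\<close> times the relation, all \<open>\<gamma>\<^sub>i / \<gamma>\<^sub>j\<close> lying in \<open>\<O>\<close>.

  (1) A convex set containing 0 is closed under \<open>z + a y\<close> for \<open>a \<in> \<O>\<close>, so \<open>conv(Y)\<close> is the
  \<open>\<O>\<close>-module generated by \<open>Y\<close>; eliminating along linear relations shrinks \<open>Y\<close> to a linearly
  independent generating set.

  (2) Appending a coordinate 1 turns a convex combination \<open>x = \<Sum>i. \<alpha>\<^sub>i s\<^sub>i\<close> over \<open>L\<close> into an
  \<open>\<O>\<^sub>L\<close>-combination of the lifted points, the last coordinate recording \<open>\<Sum>i. \<alpha>\<^sub>i = 1\<close>.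
  Eliminating along \<open>K\<close>-linear relations among the lifted points makes them linearly independent
  over \<open>K\<close>; then each \<open>\<alpha>\<^sub>j\<close> is the value at \<open>x\<close> of a \<open>K\<close>-linear dual functional, hence lies
  in \<open>K\<close>, and in \<open>\<O>\<^sub>K\<close> because \<open>\<nu>\<^sub>L\<close> extends \<open>\<nu>\<^sub>K\<close>.
\<close>

section \<open>Valuations and the valuation ring\<close>

context
  fixes v :: "'a::field \<Rightarrow> 'g::linordered_ab_group_add option"
  assumes v: "valuation v"
begin

lemma valuation_eq_None_iff: "v x = None \<longleftrightarrow> x = 0"
  using v unfolding valuation_def by auto

lemma valuation_mult: "x \<noteq> 0 \<Longrightarrow> y \<noteq> 0 \<Longrightarrow> v (x * y) = Some (the (v x) + the (v y))"
  using v unfolding valuation_def by auto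

lemma valuation_one: "v 1 = Some 0"
proof -
  obtain g where g: "v 1 = Some g"
    using valuation_eq_None_iff[of 1] by auto
  have "g + g = g"
    using valuation_mult[of 1 1] g by simp
  then show ?thesis
    using g by simp
qed

lemma valuation_minus_one: "v (- 1) = Some 0"
proof -
  obtain g where g: "v (- 1) = Some g"
    using valuation_eq_None_iff[of "- 1"] by auto
  have "g + g = 0"
    using valuation_mult[of "- 1" "- 1"] g valuation_one by simp
  then show ?thesis
    using g by simp
qed

lemma valuation_inverse: "x \<noteq> 0 \<Longrightarrow> the (v (inverse x)) = - the (v x)"
  using valuation_mult[of x "inverse x"] valuation_one by (simp add: eq_neg_iff_add_eq_0 add.commute)

lemma vring_iff: "x \<in> vring v \<longleftrightarrow> x = 0 \<or> 0 \<le> the (v x)"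
  using valuation_eq_None_iff[of x] unfolding vring_def vge_def by auto

lemma vring_zero: "0 \<in> vring v"
  by (simp add: vring_iff)

lemma vring_one: "1 \<in> vring v"
  by (simp add: vring_iff valuation_one)

lemma vring_mult: "x \<in> vring v \<Longrightarrow> y \<in> vring v \<Longrightarrow> x * y \<in> vring v"
  by (cases "x = 0 \<or> y = 0") (auto simp: vring_iff valuation_mult)

lemma vring_add:
  assumes "x \<in> vring v" "y \<in> vring v"
  shows "x + y \<in> vring v"
proof -
  have "vge (v (x + y)) (v x) \<or> vge (v (x + y)) (v y)"
    using v unfolding valuation_def by auto
  then show ?thesis
    using assms unfolding vring_def vge_def by auto
qed

lemma vring_uminus: "x \<in> vring v \<Longrightarrow> - x \<in> vring v"
  using vring_mult[of "- 1" x] by (simp add: vring_iff valuation_minus_one)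

lemma vring_diff: "x \<in> vring v \<Longrightarrow> y \<in> vring v \<Longrightarrow> x - y \<in> vring v"
  using vring_add[of x "- y"] vring_uminus by simp

lemma vring_divide: "a \<noteq> 0 \<Longrightarrow> b \<noteq> 0 \<Longrightarrow> the (v b) \<le> the (v a) \<Longrightarrow> a / b \<in> vring v"
  by (simp add: vring_iff divide_inverse valuation_mult valuation_inverse)

lemma ex_dominant_coeff:
  assumes "finite I" "\<exists>i\<in>I. \<gamma> i \<noteq> 0"
  obtains j where "j \<in> I" "\<gamma> j \<noteq> 0" "\<And>i. i \<in> I \<Longrightarrow> \<gamma> i / \<gamma> j \<in> vring v"
proof -
  let ?J = "{i\<in>I. \<gamma> i \<noteq> 0}"
  obtain j where "j \<in> ?J" and min: "\<And>i. i \<in> ?J \<Longrightarrow> the (v (\<gamma> j)) \<le> the (v (\<gamma> i))"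
    using ex_is_arg_min_if_finite[of ?J "\<lambda>i. the (v (\<gamma> i))"] assms
    by (auto simp: is_arg_min_linorder)
  moreover have "\<gamma> i / \<gamma> j \<in> vring v" if "i \<in> I" for i
    using that \<open>j \<in> ?J\<close> min[of i] vring_divide[of "\<gamma> i" "\<gamma> j"] vring_zero by (cases "\<gamma> i = 0") auto
  ultimately show ?thesis
    using that by blast
qed

end

section \<open>Combinations with coefficients in the valuation ring\<close>

lemma vring_comb_eliminate:
  fixes w :: "'i \<Rightarrow> 'a::field^'n"
  assumes v: "valuation v" and "finite I" "j \<in> I" "\<gamma> j \<noteq> 0"
    and dominant: "\<And>i. i \<in> I \<Longrightarrow> \<gamma> i / \<gamma> j \<in> vring v"
    and relation: "(\<Sum>i\<in>I. \<gamma> i *s w i) = 0"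
    and c: "\<And>i. i \<in> I \<Longrightarrow> c i \<in> vring v"
  shows "\<exists>c'. (\<forall>i\<in>I - {j}. c' i \<in> vring v) \<and> (\<Sum>i\<in>I - {j}. c' i *s w i) = (\<Sum>i\<in>I. c i *s w i)"
proof (intro exI conjI ballI)
  define c' where "c' i = c i - c j * (\<gamma> i / \<gamma> j)" for i
  show "c' i \<in> vring v" if "i \<in> I - {j}" for i
    unfolding c'_def using that \<open>j \<in> I\<close> by (intro vring_diff vring_mult v c dominant) auto
  have "(\<Sum>i\<in>I. c' i *s w i) = (\<Sum>i\<in>I. c i *s w i - (c j / \<gamma> j) *s (\<gamma> i *s w i))"
    by (rule sum.cong) (simp_all add: c'_def vec.scale_left_diff_distrib)
  also have "\<dots> = (\<Sum>i\<in>I. c i *s w i) - (c j / \<gamma> j) *s (\<Sum>i\<in>I. \<gamma> i *s w i)"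
    by (simp only: sum_subtractf vec.scale_sum_right)
  also have "\<dots> = (\<Sum>i\<in>I. c i *s w i)"
    by (simp add: relation)
  finally show "(\<Sum>i\<in>I - {j}. c' i *s w i) = (\<Sum>i\<in>I. c i *s w i)"
    using sum.remove[OF \<open>finite I\<close> \<open>j \<in> I\<close>, of "\<lambda>i. c' i *s w i"] \<open>\<gamma> j \<noteq> 0\<close>
    by (simp add: c'_def)
qed

lemma vring_span_mono:
  assumes "valuation v" "finite Y" "X \<subseteq> Y"
  shows "vring_span v X \<subseteq> vring_span v Y"
proof
  fix y assume "y \<in> vring_span v X"
  then obtain c where c: "\<And>b. b \<in> X \<Longrightarrow> c b \<in> vring v" and y: "y = (\<Sum>b\<in>X. c b *s b)"
    unfolding vring_span_def by blast
  define c' where "c' b = (if b \<in> X then c b else 0)" for b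
  have "(\<Sum>b\<in>Y. c' b *s b) = y"
    unfolding y c'_def using assms(2,3) by (intro sum.mono_neutral_cong_left[symmetric]) auto
  moreover have "c' b \<in> vring v" for b
    using c vring_zero[OF assms(1)] by (simp add: c'_def)
  ultimately show "y \<in> vring_span v Y"
    unfolding vring_span_def by (auto intro!: exI[of _ c'])
qed

lemma vring_span_independent_basis:
  assumes "valuation v" "finite (Y :: ('a::field^'n) set)"
  shows "\<exists>B \<subseteq> Y. vec.independent B \<and> vring_span v B = vring_span v Y"
  using assms(2)
proof (induction Y rule: finite_psubset_induct)
  case (psubset Y)
  show ?case
  proof (cases "vec.dependent Y")
    case False
    then show ?thesis by blast
  next
    case True
    then obtain u where "\<exists>y\<in>Y. u y \<noteq> 0" and relation: "(\<Sum>y\<in>Y. u y *s y) = 0"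
      using vec.dependent_finite[OF psubset.hyps] by auto
    then obtain y0 where y0: "y0 \<in> Y" "u y0 \<noteq> 0" and dominant: "\<And>y. y \<in> Y \<Longrightarrow> u y / u y0 \<in> vring v"
      using ex_dominant_coeff[OF assms(1) psubset.hyps] by blast
    have "vring_span v Y \<subseteq> vring_span v (Y - {y0})"
    proof
      fix y assume "y \<in> vring_span v Y"
      then obtain c where c: "\<And>b. b \<in> Y \<Longrightarrow> c b \<in> vring v" and y: "y = (\<Sum>b\<in>Y. c b *s b)"
        unfolding vring_span_def by blast
      then show "y \<in> vring_span v (Y - {y0})"
        using vring_comb_eliminate[where w = "\<lambda>b. b" and c = c, OF assms(1) psubset.hyps y0 dominant relation c]
        unfolding vring_span_def by auto
    qed
    then have "vring_span v (Y - {y0}) = vring_span v Y"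
      using vring_span_mono[OF assms(1) psubset.hyps, of "Y - {y0}"] by blast
    moreover obtain B where "B \<subseteq> Y - {y0}" "vec.independent B"
      and "vring_span v B = vring_span v (Y - {y0})"
      using psubset.IH[of "Y - {y0}"] y0 by blast
    ultimately show ?thesis
      by auto
  qed
qed

section \<open>Convex sets containing the origin are submodules\<close>

lemma vconv_superset:
  assumes "valuation v"
  shows "X \<subseteq> vconv v X"
proof
  fix y assume "y \<in> X"
  then show "y \<in> vconv v X"
    unfolding vconv_def using vring_one[OF assms]
    by (intro CollectI exI[of _ "1::nat"] exI[of _ "\<lambda>_. y"] exI[of _ "\<lambda>_. 1"]) auto
qed

lemma vconvex_add_scale:
  fixes S :: "('a::field^'n) set"
  assumes v: "valuation v" and "vconvex v S" "0 \<in> S" "z \<in> S" "y \<in> S" "a \<in> vring v"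
  shows "z + a *s y \<in> S"
proof -
  define x :: "nat \<Rightarrow> 'a^'n" where "x i = (if i = 0 then z else if i = 1 then y else 0)" for i
  define \<alpha> :: "nat \<Rightarrow> 'a" where "\<alpha> i = (if i = 0 then 1 else if i = 1 then a else - a)" for i
  have "\<forall>i<3. x i \<in> S \<and> \<alpha> i \<in> vring v"
    using assms vring_one[OF v] vring_uminus[OF v]
    by (auto simp: x_def \<alpha>_def numeral_3_eq_3 less_Suc_eq)
  moreover have "(\<Sum>i<3. \<alpha> i) = 1" and "z + a *s y = (\<Sum>i<3. \<alpha> i *s x i)"
    by (simp_all add: \<alpha>_def x_def numeral_3_eq_3)
  ultimately have "z + a *s y \<in> vconv v S"
    unfolding vconv_def by blast
  with \<open>vconvex v S\<close> show ?thesis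
    unfolding vconvex_def by blast
qed

lemma vring_span_subset_vconvex:
  assumes v: "valuation v" and "vconvex v S" "0 \<in> S" "finite Y" "Y \<subseteq> S"
  shows "vring_span v Y \<subseteq> S"
proof
  fix y assume "y \<in> vring_span v Y"
  then obtain c where c: "\<forall>b\<in>Y. c b \<in> vring v" and y: "y = (\<Sum>b\<in>Y. c b *s b)"
    unfolding vring_span_def by blast
  have "(\<forall>b\<in>F. c b \<in> vring v) \<longrightarrow> (\<Sum>b\<in>F. c b *s b) \<in> S" if "finite F" "F \<subseteq> S" for F
    using that
  proof (induction F rule: finite_subset_induct)
    case empty
    then show ?case using \<open>0 \<in> S\<close> by simp
  next
    case (insert b F)
    then show ?case
      using vconvex_add_scale[OF v \<open>vconvex v S\<close> \<open>0 \<in> S\<close>, of "\<Sum>b\<in>F. c b *s b" b "c b"]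
      by (simp add: add.commute)
  qed
  then show "y \<in> S"
    using assms(4,5) c y by blast
qed

lemma vring_span_add_scale:
  assumes v: "valuation v" and "finite Y" "z \<in> vring_span v Y" "y \<in> Y" "a \<in> vring v"
  shows "z + a *s y \<in> vring_span v Y"
proof -
  obtain c where c: "\<forall>b\<in>Y. c b \<in> vring v" and z: "z = (\<Sum>b\<in>Y. c b *s b)"
    using assms(3) unfolding vring_span_def by blast
  have "(\<Sum>b\<in>Y. (if b = y then a else 0) *s b) = (\<Sum>b\<in>Y. if b = y then a *s y else 0)"
    by (rule sum.cong) auto
  then have delta: "(\<Sum>b\<in>Y. (if b = y then a else 0) *s b) = a *s y"
    using assms(2,4) by simp
  define c' where "c' b = c b + (if b = y then a else 0)" for b
  have "(\<Sum>b\<in>Y. c' b *s b) = z + a *s y"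
    by (simp add: c'_def z delta vec.scale_left_distrib sum.distrib)
  moreover have "\<forall>b\<in>Y. c' b \<in> vring v"
    using c assms(5) vring_add[OF v] vring_zero[OF v] by (simp add: c'_def)
  ultimately show ?thesis
    unfolding vring_span_def by (auto intro!: exI[of _ c'])
qed

lemma vconv_subset_vring_span:
  fixes Y :: "('a::field^'n) set"
  assumes v: "valuation v" and "finite Y"
  shows "vconv v Y \<subseteq> vring_span v Y"
proof
  fix y assume "y \<in> vconv v Y"
  then obtain m :: nat and x \<alpha> where x: "\<forall>i<m. x i \<in> Y \<and> \<alpha> i \<in> vring v"
    and y: "y = (\<Sum>i<m. \<alpha> i *s x i)"
    unfolding vconv_def by blast
  have "(\<Sum>i<k. \<alpha> i *s x i) \<in> vring_span v Y" if "k \<le> m" for k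
    using that
  proof (induction k)
    case 0
    show ?case
      unfolding vring_span_def using vring_zero[OF v] by (auto intro!: exI[of _ "\<lambda>_. 0"])
  next
    case (Suc k)
    then show ?case
      using vring_span_add_scale[OF v \<open>finite Y\<close>, of "\<Sum>i<k. \<alpha> i *s x i" "x k" "\<alpha> k"] x by simp
  qed
  then show "y \<in> vring_span v Y"
    using y by blast
qed

lemma vconv_eq_vring_span:
  assumes v: "valuation v" and "finite Y" "vconvex v (vconv v Y)" "0 \<in> vconv v Y"
  shows "vconv v Y = vring_span v Y"
  using vring_span_subset_vconvex[OF v assms(3,4,2) vconv_superset[OF v]]
    vconv_subset_vring_span[OF v assms(2)] by blast

section \<open>Descent of combinations along a valued field extension\<close>

lemma linear_functional_expansion:
  fixes g :: "'a::field^'n \<Rightarrow> 'a"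
  assumes "Vector_Spaces.linear (*s) (*) g"
  shows "g z = (\<Sum>k\<in>UNIV. z $ k * g (axis k 1))"
proof -
  interpret Vector_Spaces.linear "(*s)" "(*)" g
    by fact
  have "g z = g (\<Sum>k\<in>UNIV. z $ k *s axis k 1)"
    by (simp add: basis_expansion)
  then show ?thesis
    by (simp add: sum scale)
qed

lemma ex_dual_functional:
  fixes w :: "'i \<Rightarrow> 'a::field^'n"
  assumes "finite I" "j \<in> I"
    and independent: "\<And>\<gamma>. (\<Sum>i\<in>I. \<gamma> i *s w i) = 0 \<Longrightarrow> \<forall>i\<in>I. \<gamma> i = 0"
  shows "\<exists>g. Vector_Spaces.linear (*s) (*) g \<and> (\<forall>i\<in>I. g (w i) = (if i = j then 1 else 0))"
proof -
  interpret vector_space_pair "(*s) :: 'a \<Rightarrow> 'a^'n \<Rightarrow> _" "(*) :: 'a \<Rightarrow> 'a \<Rightarrow> 'a"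
    by unfold_locales
  have inj: "inj_on w I"
  proof (rule inj_onI, rule ccontr)
    fix i i' assume "i \<in> I" "i' \<in> I" "w i = w i'" "i \<noteq> i'"
    define \<gamma> :: "'i \<Rightarrow> 'a" where "\<gamma> l = (if l = i then 1 else if l = i' then - 1 else 0)" for l
    have "(\<Sum>l\<in>I. \<gamma> l *s w l) = w i - w i'"
      using \<open>finite I\<close> \<open>i \<in> I\<close> \<open>i' \<in> I\<close> \<open>i \<noteq> i'\<close>
      by (simp add: \<gamma>_def if_distrib[of "\<lambda>t. t *s _"] sum.If_cases Int_absorb1 Diff_eq[symmetric])
    then have "\<gamma> i = 0"
      using independent[of \<gamma>] \<open>w i = w i'\<close> \<open>i \<in> I\<close> by simp
    then show False
      by (simp add: \<gamma>_def)
  qed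
  have "vec.independent (w ` I)"
  proof (rule vec.independent_if_scalars_zero)
    fix f x assume "(\<Sum>x\<in>w ` I. f x *s x) = 0" "x \<in> w ` I"
    then show "f x = 0"
      using independent[of "f \<circ> w"] by (auto simp: sum.reindex[OF inj])
  qed (use \<open>finite I\<close> in simp)
  then obtain g where "Vector_Spaces.linear (*s) (*) g" "\<forall>x\<in>w ` I. g x = (if x = w j then 1 else 0)"
    using linear_independent_extend[of "w ` I" "\<lambda>x. if x = w j then 1 else 0"] by blast
  then show ?thesis
    using inj \<open>j \<in> I\<close> by (auto simp: inj_on_eq_iff)
qed

definition homog :: "'a::one^'n \<Rightarrow> 'a^('n + unit)" where
  "homog x = (\<chi> j. case j of Inl k \<Rightarrow> x $ k | Inr _ \<Rightarrow> 1)"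

lemma homog_eq_comb_iff:
  fixes w :: "'i \<Rightarrow> 'a::comm_ring_1^'n"
  shows "homog y = (\<Sum>i\<in>I. \<beta> i *s homog (w i)) \<longleftrightarrow> sum \<beta> I = 1 \<and> y = (\<Sum>i\<in>I. \<beta> i *s w i)"
  by (auto simp: vec_eq_iff homog_def split_sum_all)

locale valued_field_extension =
  fixes vK :: "'k::field \<Rightarrow> 'g::linordered_ab_group_add option"
    and vL :: "'l::field \<Rightarrow> 'g option"
    and \<iota> :: "'k \<Rightarrow> 'l"
  assumes valuation_K: "valuation vK" and valuation_L: "valuation vL"
    and hom_one: "\<iota> 1 = 1"
    and hom_add: "\<iota> (x + y) = \<iota> x + \<iota> y"
    and hom_mult: "\<iota> (x * y) = \<iota> x * \<iota> y"
    and valuation_hom: "vL (\<iota> x) = vK x"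
begin

lemma hom_zero: "\<iota> 0 = 0"
  using hom_add[of 0 0] by (metis add.right_neutral add_left_cancel)

lemma hom_eq_0_iff: "\<iota> x = 0 \<longleftrightarrow> x = 0"
proof -
  have "\<iota> x = 0 \<longleftrightarrow> vL (\<iota> x) = None"
    by (rule valuation_eq_None_iff[OF valuation_L, symmetric])
  also have "\<dots> \<longleftrightarrow> x = 0"
    by (simp add: valuation_hom valuation_eq_None_iff[OF valuation_K])
  finally show ?thesis .
qed

lemma hom_diff: "\<iota> (x - y) = \<iota> x - \<iota> y"
  using hom_add[of "x - y" y] by (simp add: algebra_simps)

lemma hom_eq_iff: "\<iota> x = \<iota> y \<longleftrightarrow> x = y"
  using hom_eq_0_iff[of "x - y"] by (simp add: hom_diff)

lemma hom_sum: "\<iota> (sum f A) = (\<Sum>x\<in>A. \<iota> (f x))"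
  by (induction A rule: infinite_finite_induct) (simp_all add: hom_zero hom_add)

lemma hom_divide: "\<iota> (x / y) = \<iota> x / \<iota> y"
proof (cases "y = 0")
  case False
  then have "\<iota> (x / y) * \<iota> y = \<iota> x"
    by (simp flip: hom_mult)
  with False show ?thesis
    by (simp add: hom_eq_0_iff eq_divide_eq)
qed (simp add: hom_zero)

lemma hom_in_vring_iff: "\<iota> x \<in> vring vL \<longleftrightarrow> x \<in> vring vK"
  by (simp add: vring_def valuation_hom)

lemma vmap_scale_sum: "vmap \<iota> (\<Sum>i\<in>I. a i *s w i) = (\<Sum>i\<in>I. \<iota> (a i) *s vmap \<iota> (w i))"
  by (simp add: vec_eq_iff vmap_def hom_sum hom_mult)

lemma vmap_zero: "vmap \<iota> 0 = 0"
  by (simp add: vec_eq_iff vmap_def hom_zero)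

lemma vmap_homog: "vmap \<iota> (homog x) = homog (vmap \<iota> x)"
  by (simp add: vec_eq_iff vmap_def homog_def hom_one split: sum.split)

lemma vmap_eq_iff: "vmap \<iota> x = vmap \<iota> y \<longleftrightarrow> x = y"
  by (simp add: vec_eq_iff vmap_def hom_eq_iff)

lemma hom_linear_functional_comb:
  fixes w :: "'i \<Rightarrow> 'k^'n"
  assumes g: "Vector_Spaces.linear (*s) (*) g"
    and y: "vmap \<iota> y = (\<Sum>i\<in>I. \<alpha> i *s vmap \<iota> (w i))"
  shows "\<iota> (g y) = (\<Sum>i\<in>I. \<alpha> i * \<iota> (g (w i)))"
proof -
  define c where "c k = \<iota> (g (axis k 1))" for k
  have expand: "\<iota> (g z) = (\<Sum>k\<in>UNIV. \<iota> (z $ k) * c k)" for z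
    unfolding c_def by (subst linear_functional_expansion[OF g]) (simp add: hom_sum hom_mult)
  have "\<iota> (g y) = (\<Sum>k\<in>UNIV. (\<Sum>i\<in>I. \<alpha> i * \<iota> (w i $ k)) * c k)"
    unfolding expand using y by (simp add: vec_eq_iff vmap_def)
  also have "\<dots> = (\<Sum>k\<in>UNIV. \<Sum>i\<in>I. \<alpha> i * (\<iota> (w i $ k) * c k))"
    by (simp only: sum_distrib_right mult.assoc)
  also have "\<dots> = (\<Sum>i\<in>I. \<Sum>k\<in>UNIV. \<alpha> i * (\<iota> (w i $ k) * c k))"
    by (rule sum.swap)
  also have "\<dots> = (\<Sum>i\<in>I. \<alpha> i * \<iota> (g (w i)))"
    by (simp only: sum_distrib_left expand)
  finally show ?thesis .
qed

lemma vring_comb_eliminate_along_hom: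
  fixes w :: "'i \<Rightarrow> 'k^'n"
  assumes "finite I" "\<forall>i\<in>I. \<alpha> i \<in> vring vL"
    and y: "vmap \<iota> y = (\<Sum>i\<in>I. \<alpha> i *s vmap \<iota> (w i))"
    and "\<exists>i\<in>I. \<gamma> i \<noteq> 0" and relation: "(\<Sum>i\<in>I. \<gamma> i *s w i) = 0"
  shows "\<exists>j\<in>I. \<exists>\<alpha>'. (\<forall>i\<in>I - {j}. \<alpha>' i \<in> vring vL)
           \<and> vmap \<iota> y = (\<Sum>i\<in>I - {j}. \<alpha>' i *s vmap \<iota> (w i))"
proof -
  obtain j where j: "j \<in> I" "\<gamma> j \<noteq> 0" and dominant: "\<And>i. i \<in> I \<Longrightarrow> \<gamma> i / \<gamma> j \<in> vring vK"
    using ex_dominant_coeff[OF valuation_K assms(1,4)] by blast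
  have relation_L: "(\<Sum>i\<in>I. \<iota> (\<gamma> i) *s vmap \<iota> (w i)) = 0"
    using vmap_scale_sum[of \<gamma> w I] by (simp add: relation vmap_zero)
  have nonzero_L: "\<iota> (\<gamma> j) \<noteq> 0"
    using j by (simp add: hom_eq_0_iff)
  have dominant_L: "\<iota> (\<gamma> i) / \<iota> (\<gamma> j) \<in> vring vL" if "i \<in> I" for i
    using dominant[OF that] by (simp add: hom_in_vring_iff flip: hom_divide)
  have "\<And>i. i \<in> I \<Longrightarrow> \<alpha> i \<in> vring vL"
    using assms(2) by blast
  from vring_comb_eliminate[where w = "\<lambda>i. vmap \<iota> (w i)" and c = \<alpha>,
      OF valuation_L assms(1) j(1) nonzero_L dominant_L relation_L this]
  obtain \<alpha>' where "\<forall>i\<in>I - {j}. \<alpha>' i \<in> vring vL"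
    and "(\<Sum>i\<in>I - {j}. \<alpha>' i *s vmap \<iota> (w i)) = vmap \<iota> y"
    unfolding y by blast
  with j(1) show ?thesis
    by (intro bexI[of _ j] exI[of _ \<alpha>']) simp_all
qed

lemma vring_comb_descent_independent:
  fixes w :: "'i \<Rightarrow> 'k^'n"
  assumes "finite I" "\<forall>i\<in>I. \<alpha> i \<in> vring vL"
    and y: "vmap \<iota> y = (\<Sum>i\<in>I. \<alpha> i *s vmap \<iota> (w i))"
    and independent: "\<And>\<gamma>. (\<Sum>i\<in>I. \<gamma> i *s w i) = 0 \<Longrightarrow> \<forall>i\<in>I. \<gamma> i = 0"
  shows "\<exists>\<beta>. (\<forall>i\<in>I. \<beta> i \<in> vring vK) \<and> y = (\<Sum>i\<in>I. \<beta> i *s w i)"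
proof -
  have "\<exists>b. \<iota> b = \<alpha> j" if j: "j \<in> I" for j
  proof -
    obtain g where g: "Vector_Spaces.linear (*s) (*) g" and dual: "\<forall>i\<in>I. g (w i) = (if i = j then 1 else 0)"
      using ex_dual_functional[OF assms(1) j independent] by blast
    have "\<iota> (g y) = (\<Sum>i\<in>I. \<alpha> i * \<iota> (if i = j then 1 else 0))"
      using hom_linear_functional_comb[OF g y] dual by simp
    also have "\<dots> = (\<Sum>i\<in>I. if i = j then \<alpha> j else 0)"
      by (rule sum.cong) (simp_all add: hom_one hom_zero)
    also have "\<dots> = \<alpha> j"
      using assms(1) j by simp
    finally show ?thesis ..
  qed
  then obtain \<beta> where \<alpha>: "\<forall>j\<in>I. \<iota> (\<beta> j) = \<alpha> j"
    by metis
  have "vmap \<iota> y = vmap \<iota> (\<Sum>i\<in>I. \<beta> i *s w i)"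
    using y \<alpha> by (simp add: vmap_scale_sum)
  moreover have "\<forall>i\<in>I. \<beta> i \<in> vring vK"
    using assms(2) \<alpha> by (simp flip: hom_in_vring_iff)
  ultimately show ?thesis
    by (auto simp: vmap_eq_iff)
qed

lemma vring_comb_descent:
  fixes w :: "'i \<Rightarrow> 'k^'n"
  assumes "finite I" "\<forall>i\<in>I. \<alpha> i \<in> vring vL"
    and "vmap \<iota> y = (\<Sum>i\<in>I. \<alpha> i *s vmap \<iota> (w i))"
  shows "\<exists>\<beta>. (\<forall>i\<in>I. \<beta> i \<in> vring vK) \<and> y = (\<Sum>i\<in>I. \<beta> i *s w i)"
  using assms
proof (induction I arbitrary: \<alpha> rule: finite_psubset_induct)
  case (psubset I)
  show ?case
  proof (cases "\<exists>\<gamma>. (\<exists>i\<in>I. \<gamma> i \<noteq> 0) \<and> (\<Sum>i\<in>I. \<gamma> i *s w i) = 0")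
    case True
    then obtain j \<alpha>' where j: "j \<in> I" and "\<forall>i\<in>I - {j}. \<alpha>' i \<in> vring vL"
      and "vmap \<iota> y = (\<Sum>i\<in>I - {j}. \<alpha>' i *s vmap \<iota> (w i))"
      using vring_comb_eliminate_along_hom[OF psubset.hyps psubset.prems] by blast
    then obtain \<beta> where \<beta>: "\<forall>i\<in>I - {j}. \<beta> i \<in> vring vK" and y: "y = (\<Sum>i\<in>I - {j}. \<beta> i *s w i)"
      using psubset.IH[of "I - {j}" \<alpha>'] by auto
    have "y = (\<Sum>i\<in>I. (\<beta>(j := 0)) i *s w i)"
      unfolding y by (rule sum.mono_neutral_cong_left) (use psubset.hyps in auto)
    moreover have "\<forall>i\<in>I. (\<beta>(j := 0)) i \<in> vring vK"
      using \<beta> vring_zero[OF valuation_K] by simp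
    ultimately show ?thesis
      by blast
  next
    case False
    then show ?thesis
      using vring_comb_descent_independent[OF psubset.hyps psubset.prems] by blast
  qed
qed

lemma vconv_descent:
  assumes "vmap \<iota> x \<in> vconv vL (vmap \<iota> ` S)"
  shows "x \<in> vconv vK S"
proof -
  obtain m :: nat and p \<alpha> where p: "\<forall>i<m. p i \<in> vmap \<iota> ` S \<and> \<alpha> i \<in> vring vL"
    and "(\<Sum>i<m. \<alpha> i) = 1" and x: "vmap \<iota> x = (\<Sum>i<m. \<alpha> i *s p i)"
    using assms unfolding vconv_def by blast
  have "\<forall>i<m. \<exists>t. t \<in> S \<and> p i = vmap \<iota> t"
    using p by blast
  then obtain s where s: "\<forall>i<m. s i \<in> S \<and> p i = vmap \<iota> (s i)"
    by metis
  have "homog (vmap \<iota> x) = (\<Sum>i<m. \<alpha> i *s homog (vmap \<iota> (s i)))"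
    using \<open>(\<Sum>i<m. \<alpha> i) = 1\<close> x s by (simp add: homog_eq_comb_iff)
  then have "vmap \<iota> (homog x) = (\<Sum>i<m. \<alpha> i *s vmap \<iota> (homog (s i)))"
    by (simp add: vmap_homog)
  moreover have "\<forall>i\<in>{..<m}. \<alpha> i \<in> vring vL"
    using p by blast
  ultimately obtain \<beta> where \<beta>: "\<forall>i\<in>{..<m}. \<beta> i \<in> vring vK"
    and "homog x = (\<Sum>i<m. \<beta> i *s homog (s i))"
    using vring_comb_descent[where w = "\<lambda>i. homog (s i)", OF finite_lessThan] by blast
  then have "(\<Sum>i<m. \<beta> i) = 1" and "x = (\<Sum>i<m. \<beta> i *s s i)"
    by (simp_all add: homog_eq_comb_iff)
  with \<beta> s show ?thesis
    unfolding vconv_def by blast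
qed

end

theorem lemma4p2:
  fixes vK :: "'k::field \<Rightarrow> 'g::linordered_ab_group_add option"
    and S :: "('k^'n) set"
  assumes vK: "valuation vK"
    and conv: "vconvex vK S"
  shows "(0 \<in> S \<longrightarrow> (\<exists>Y. finite Y \<and> S = vconv vK Y) \<longrightarrow>
            (\<exists>B. finite B \<and> vec.independent B \<and> S = vring_span vK B))
       \<and> (\<forall>(vL :: 'l::field \<Rightarrow> 'g option) (\<iota> :: 'k \<Rightarrow> 'l).
            valuation vL \<longrightarrow> \<iota> 1 = 1 \<longrightarrow> (\<forall>x y. \<iota> (x + y) = \<iota> x + \<iota> y)
            \<longrightarrow> (\<forall>x y. \<iota> (x * y) = \<iota> x * \<iota> y) \<longrightarrow> (\<forall>x. vL (\<iota> x) = vK x) \<longrightarrow>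
            {x. vmap \<iota> x \<in> vconv vL (vmap \<iota> ` S)} = S)"
proof (intro conjI allI impI)
  assume "0 \<in> S" and "\<exists>Y. finite Y \<and> S = vconv vK Y"
  then obtain Y where "finite Y" "S = vconv vK Y"
    by blast
  then have "S = vring_span vK Y"
    using vconv_eq_vring_span[OF vK \<open>finite Y\<close>] conv \<open>0 \<in> S\<close> by blast
  moreover obtain B where "B \<subseteq> Y" "vec.independent B" "vring_span vK B = vring_span vK Y"
    using vring_span_independent_basis[OF vK \<open>finite Y\<close>] by blast
  moreover have "finite B"
    using \<open>B \<subseteq> Y\<close> \<open>finite Y\<close> by (rule finite_subset)
  ultimately show "\<exists>B. finite B \<and> vec.independent B \<and> S = vring_span vK B"
    by auto
next
  fix vL :: "'l \<Rightarrow> 'g option" and \<iota> :: "'k \<Rightarrow> 'l"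
  assume "valuation vL" "\<iota> 1 = 1" "\<forall>x y. \<iota> (x + y) = \<iota> x + \<iota> y"
    "\<forall>x y. \<iota> (x * y) = \<iota> x * \<iota> y" "\<forall>x. vL (\<iota> x) = vK x"
  then interpret valued_field_extension vK vL \<iota>
    using vK by unfold_locales blast+
  show "{x. vmap \<iota> x \<in> vconv vL (vmap \<iota> ` S)} = S"
    using vconv_descent conv vconv_superset[OF valuation_L] unfolding vconvex_def by blast
qed

end
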